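(* Let $N\ge 2$, $k=2$, $T=2$, and suppose $p_{11}\ge p_{01}$. Then for every initial belief vector $\omega(1)=(\omega_1,\dots,\omega_N)\in[0,1]^N$, the myopic sensing policy (with any tie-breaking) is optimal. That is, its expected total reward over the two slots equals the maximum expected total reward over the two slots achievable by any sensing policy.
   Context: Opportunistic spectrum access model. There are $N$ channels. The state $S_i(t)\in\{0,1\}$ of channel $i$ in slot $t$ (0 = busy, 1 = idle) evolves as a two-state discrete-time Markov chain with transition probabilities $p_{ij}=\Pr(S_i(t+1)=j\mid S_i(t)=i)$. The chains are independent across channels and all have the same transition probabilities $p_{01},p_{11}\in[0,1]$. The initial states are independent with $\Pr(S_i(1)=1)=\omega_i(1)$. In each slot $t=1,\dots,T$, a secondary user chooses a set $\mathcal{A}(t)$ of exactly $k$ channels to sense, based on past actions and observations. It observes the states of the sensed channels and obtains reward $1$ if at least one sensed channel is idle, and reward $0$ otherwise. The belief $\omega_i(t)$ is the conditional probability that $S_i(t)=1$ given past actions and observations. The expected immediate reward of action $\mathcal{A}(t)$ is $1-\prod_{i\in\mathcal{A}(t)}(1-\omega_i(t))$. Beliefs update as follows: $\omega_i(t+1)=p_{11}$ if $i\in\mathcal{A}(t)$ and $S_i(t)=1$; $\omega_i(t+1)=p_{01}$ if $i\in\mathcal{A}(t)$ and $S_i(t)=0$; and $\omega_i(t+1)=\tau(\omega_i(t))$ if $i\notin\mathcal{A}(t)$, where $\tau(\omega)=\omega p_{11}+(1-\omega)p_{01}$. A policy maps histories to actions. The objective is to maximize the expected total (equivalently, average) reward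 over slots $1,\dots,T$. The myopic sensing policy senses, in every slot, $k$ channels with the largest current beliefs $\omega_i(t)$, i.e. it maximizes the immediate expected reward. *)

theory Defs
  imports Main "HOL-Library.FuncSet" Complex_Main
begin

text \<open>In the two-slot problem (T = 2) a
  (deterministic, history-dependent) policy is a pair (A1, f): A1 is the set
  sensed in slot 1, and f maps the slot-1 observation (the set S of channels in A1
  that were observed idle; the rest of A1 were observed busy) to the set sensed in slot 2.\<close>

definition valid_action :: "nat \<Rightarrow> nat \<Rightarrow> nat set \<Rightarrow> bool" where
  "valid_action N k A \<longleftrightarrow> A \<subseteq> {..<N} \<and> card A = k"

definition tau :: "real \<Rightarrow> real \<Rightarrow> real \<Rightarrow> real" where
  "tau p01 p11 w = w * p11 + (1 - w) * p01"

definition exp_reward :: "(nat \<Rightarrow> real) \<Rightarrow> nat set \<Rightarrow> real" where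
  "exp_reward w A = 1 - (\<Prod>i\<in>A. (1 - w i))"

definition belief_update ::
  "real \<Rightarrow> real \<Rightarrow> (nat \<Rightarrow> real) \<Rightarrow> nat set \<Rightarrow> nat set \<Rightarrow> nat \<Rightarrow> real" where
  "belief_update p01 p11 w A S i =
     (if i \<in> S then p11 else if i \<in> A then p01 else tau p01 p11 (w i))"

definition obs_prob :: "(nat \<Rightarrow> real) \<Rightarrow> nat set \<Rightarrow> nat set \<Rightarrow> real" where
  "obs_prob w A S = (\<Prod>i\<in>S. w i) * (\<Prod>i\<in>A - S. (1 - w i))"

definition is_policy2 :: "nat \<Rightarrow> nat \<Rightarrow> nat set \<times> (nat set \<Rightarrow> nat set) \<Rightarrow> bool" where
  "is_policy2 N k pol \<longleftrightarrow>
     valid_action N k (fst pol) \<and> (\<forall>S. S \<subseteq> fst pol \<longrightarrow> valid_action N k (snd pol S))"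

definition value2 ::
  "real \<Rightarrow> real \<Rightarrow> (nat \<Rightarrow> real) \<Rightarrow> nat set \<times> (nat set \<Rightarrow> nat set) \<Rightarrow> real" where
  "value2 p01 p11 w pol =
     exp_reward w (fst pol) +
     (\<Sum>S\<in>Pow (fst pol). obs_prob w (fst pol) S *
        exp_reward (belief_update p01 p11 w (fst pol) S) (snd pol S))"

definition myopic_action :: "nat \<Rightarrow> nat \<Rightarrow> (nat \<Rightarrow> real) \<Rightarrow> nat set \<Rightarrow> bool" where
  "myopic_action N k w A \<longleftrightarrow>
     valid_action N k A \<and> (\<forall>i\<in>A. \<forall>j\<in>{..<N} - A. w j \<le> w i)"

definition is_myopic_policy2 ::
  "nat \<Rightarrow> nat \<Rightarrow> real \<Rightarrow> real \<Rightarrow> (nat \<Rightarrow> real) \<Rightarrow> nat set \<times> (nat set \<Rightarrow> nat set) \<Rightarrow> bool" where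
  "is_myopic_policy2 N k p01 p11 w pol \<longleftrightarrow>
     myopic_action N k w (fst pol) \<and>
     (\<forall>S. S \<subseteq> fst pol \<longrightarrow>
        myopic_action N k (belief_update p01 p11 w (fst pol) S) (snd pol S))"

end

theory Submission
  imports Defs
begin

(* We work with failure (all-busy) probabilities instead of rewards: the value of a
   two-slot policy that first senses the pair {a, b} is 2 minus its expected number of
   failed slots, a weighted combination of the four possible slot-1 observations.
   Channels N and N+1 are added as padding channels that are always busy.

   1. busy_bound x y u v is the expected number of failures when the sensed channels
      have busy probabilities x, y and the best unsensed channels have u, v; it is
      monotone in u, v, and two exchange inequalities say that moving a more reliable
      channel into the sensed pair never increases it.
   2. For the myopic policy the number of failures is at most busy_bound of its pair and
      ANY two outside channels (the myopic second action minimises the all-busy product);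
      for an arbitrary policy it is at least busy_bound of its pair and the TWO BEST
      outside channels.
   3. A case analysis on how the myopic pair meets the other pair (equal, one common
      channel, disjoint) connects the two bounds through the exchange inequalities. *)

(* Expected number of failed slots when the slot-1 channels are busy with probabilities
   x and y independently, and slot 2 fails with probability m2, ma, mb or m0 after
   observing both idle, only the first idle, only the second idle, or neither idle. *)
definition expected_failures :: "real \<Rightarrow> real \<Rightarrow> real \<Rightarrow> real \<Rightarrow> real \<Rightarrow> real \<Rightarrow> real" where
  "expected_failures x y m2 ma mb m0 =
     x * y + (1 - x) * (1 - y) * m2 + (1 - x) * y * ma + x * (1 - y) * mb + x * y * m0"

(* Busy probability in the next slot of an unobserved channel currently busy with
   probability e (this is 1 - tau applied to the idle probability 1 - e). *)
definition busy_next :: "real \<Rightarrow> real \<Rightarrow> real \<Rightarrow> real" where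
  "busy_next p01 p11 e = 1 - p11 + e * (p11 - p01)"

(* Expected failures when x, y are the busy probabilities of the sensed pair and u, v
   those of the two unsensed channels used in slot 2: an idle channel stays idle with
   probability p11, and unobserved channels evolve by busy_next. *)
definition busy_bound :: "real \<Rightarrow> real \<Rightarrow> real \<Rightarrow> real \<Rightarrow> real \<Rightarrow> real \<Rightarrow> real" where
  "busy_bound p01 p11 x y u v =
     expected_failures x y ((1 - p11) * (1 - p11))
       ((1 - p11) * busy_next p01 p11 u) ((1 - p11) * busy_next p01 p11 u)
       (busy_next p01 p11 u * busy_next p01 p11 v)"

lemma expected_failures_mono:
  assumes "0 \<le> x" "x \<le> 1" "0 \<le> y" "y \<le> 1"
    and "m2 \<le> m2'" "ma \<le> ma'" "mb \<le> mb'" "m0 \<le> m0'"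
  shows "expected_failures x y m2 ma mb m0 \<le> expected_failures x y m2' ma' mb' m0'"
proof -
  have "(1 - x) * (1 - y) * m2 \<le> (1 - x) * (1 - y) * m2'"
    and "(1 - x) * y * ma \<le> (1 - x) * y * ma'"
    and "x * (1 - y) * mb \<le> x * (1 - y) * mb'"
    and "x * y * m0 \<le> x * y * m0'"
    using assms by (intro mult_left_mono; simp)+
  then show ?thesis unfolding expected_failures_def by linarith
qed

lemma busy_next_mono: "p01 \<le> p11 \<Longrightarrow> u \<le> v \<Longrightarrow> busy_next p01 p11 u \<le> busy_next p01 p11 v"
  unfolding busy_next_def by (simp add: mult_right_mono)

lemma busy_next_lower: "p01 \<le> p11 \<Longrightarrow> 0 \<le> u \<Longrightarrow> 1 - p11 \<le> busy_next p01 p11 u"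
  unfolding busy_next_def by simp

lemma busy_bound_sym: "busy_bound p01 p11 x y u v = busy_bound p01 p11 y x u v"
  unfolding busy_bound_def expected_failures_def by (simp add: algebra_simps)

lemma busy_bound_mono:
  assumes "0 \<le> x" "x \<le> 1" "0 \<le> y" "y \<le> 1" "p01 \<le> p11" "p11 \<le> 1"
    and "0 \<le> u" "u \<le> u'" "0 \<le> v" "v \<le> v'"
  shows "busy_bound p01 p11 x y u v \<le> busy_bound p01 p11 x y u' v'"
proof -
  let ?U = "busy_next p01 p11"
  have U: "?U u \<le> ?U u'" "?U v \<le> ?U v'" using assms by (auto intro: busy_next_mono)
  have "0 \<le> 1 - p11" "1 - p11 \<le> ?U u" "1 - p11 \<le> ?U v"
    using assms busy_next_lower by auto
  with U have "(1 - p11) * ?U u \<le> (1 - p11) * ?U u'" "?U u * ?U v \<le> ?U u' * ?U v'"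
    by (auto intro!: mult_mono mult_left_mono)
  then show ?thesis unfolding busy_bound_def using assms by (intro expected_failures_mono) auto
qed

(* Exchange inequality 1: of two channels with busy probabilities p <= P, sensing the
   first and keeping the second as first backup is better than the other way round. *)
lemma busy_bound_exchange_sensed:
  assumes "0 \<le> x" "p \<le> P" "0 \<le> p01" "p01 \<le> p11" "p11 \<le> 1" "0 \<le> t"
  shows "busy_bound p01 p11 x p P t \<le> busy_bound p01 p11 x P p t"
proof -
  let ?q = "1 - p11"
  have eq: "busy_bound p01 p11 x P p t - busy_bound p01 p11 x p P t
      = (P - p) * x * (1 - ?q * (1 - p01) + ?q * busy_next p01 p11 t)"
    unfolding busy_bound_def expected_failures_def busy_next_def by (simp add: algebra_simps)
  have "?q * (1 - p01) \<le> 1" using assms by (intro mult_le_one) auto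
  moreover have "0 \<le> ?q * busy_next p01 p11 t" unfolding busy_next_def using assms by simp
  ultimately have "0 \<le> (P - p) * x * (1 - ?q * (1 - p01) + ?q * busy_next p01 p11 t)"
    using assms by simp
  with eq show ?thesis by linarith
qed

(* Exchange inequality 2: the same holds when the channel not sensed becomes the second
   backup instead of the first one. *)
lemma busy_bound_exchange_first:
  assumes "0 \<le> X" "X \<le> 1" "p \<le> P" "0 \<le> p01" "p01 \<le> p11" "p11 \<le> 1" "0 \<le> z"
  shows "busy_bound p01 p11 p X z P \<le> busy_bound p01 p11 P X z p"
proof -
  have eq: "busy_bound p01 p11 P X z p - busy_bound p01 p11 p X z P
      = (P - p) * (X + (1 - p11) * (1 - X) * (z * (p11 - p01)))"
    unfolding busy_bound_def expected_failures_def busy_next_def by (simp add: algebra_simps)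
  have "0 \<le> (1 - p11) * (1 - X) * (z * (p11 - p01))" using assms by simp
  then have "0 \<le> (P - p) * (X + (1 - p11) * (1 - X) * (z * (p11 - p01)))" using assms by simp
  with eq show ?thesis by linarith
qed

(* Busy probability of channel j; the indices N and N + 1 serve as padding channels
   that are always busy, so every pair of real channels has two channels outside it. *)
definition fail :: "nat \<Rightarrow> (nat \<Rightarrow> real) \<Rightarrow> nat \<Rightarrow> real" where
  "fail N w j = (if j < N then 1 - w j else 1)"

definition miss_prob ::
  "real \<Rightarrow> real \<Rightarrow> (nat \<Rightarrow> real) \<Rightarrow> nat set \<Rightarrow> (nat set \<Rightarrow> nat set) \<Rightarrow> nat set \<Rightarrow> real" where
  "miss_prob p01 p11 w A f S = (\<Prod>i\<in>f S. 1 - belief_update p01 p11 w A S i)"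

definition pair_failures ::
  "real \<Rightarrow> real \<Rightarrow> nat \<Rightarrow> (nat \<Rightarrow> real) \<Rightarrow> nat \<Rightarrow> nat \<Rightarrow> (nat set \<Rightarrow> nat set) \<Rightarrow> real" where
  "pair_failures p01 p11 N w a b f =
     (let m = miss_prob p01 p11 w {a, b} f
      in expected_failures (fail N w a) (fail N w b) (m {a, b}) (m {a}) (m {b}) (m {}))"

lemma fail_range: "\<forall>i<N. 0 \<le> w i \<and> w i \<le> 1 \<Longrightarrow> 0 \<le> fail N w j \<and> fail N w j \<le> 1"
  unfolding fail_def by auto

lemma value2_pair:
  assumes "a \<noteq> b" "a < N" "b < N"
  shows "value2 p01 p11 w ({a, b}, f) = 2 - pair_failures p01 p11 N w a b f"
proof -
  have P: "Pow {a, b} = {{}, {a}, {b}, {a, b}}" by blast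
  have d: "{a} - {a} = {}" "{a, b} - {a} = {b}" "{a, b} - {b} = {a}" "{a, b} - {a, b} = {}"
    using assms by auto
  show ?thesis
    unfolding value2_def fst_conv snd_conv pair_failures_def expected_failures_def miss_prob_def
      exp_reward_def obs_prob_def fail_def P
    using assms by (simp add: d algebra_simps insert_commute)
qed

lemma belief_update_le_p11:
  assumes "p01 \<le> p11" "w i \<le> 1"
  shows "belief_update p01 p11 w A S i \<le> p11"
proof -
  have "tau p01 p11 (w i) = p11 - (1 - w i) * (p11 - p01)"
    unfolding tau_def by (simp add: algebra_simps)
  also have "\<dots> \<le> p11" using assms by simp
  finally show ?thesis using assms unfolding belief_update_def by auto
qed

lemma busy_after_unsensed:
  assumes "i \<notin> A" "S \<subseteq> A" "i < N"
  shows "1 - belief_update p01 p11 w A S i = busy_next p01 p11 (fail N w i)"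
  using assms unfolding belief_update_def busy_next_def fail_def tau_def
  by (auto simp: algebra_simps)

lemma busy_after_busy:
  assumes "i \<in> A - S"
  shows "1 - belief_update p01 p11 w A S i = busy_next p01 p11 1"
  using assms unfolding belief_update_def busy_next_def by auto

lemma busy_after_idle:
  assumes "i \<in> S"
  shows "1 - belief_update p01 p11 w A S i = 1 - p11"
  using assms unfolding belief_update_def by auto

lemma busy_after_lower:
  assumes "S \<subseteq> B" "i < N" "i \<notin> S" "i \<in> B \<or> u \<le> fail N w i" "u \<le> 1" "p01 \<le> p11"
  shows "busy_next p01 p11 u \<le> 1 - belief_update p01 p11 w B S i"
proof (cases "i \<in> B")
  case True
  then show ?thesis using assms busy_after_busy[of i B S] busy_next_mono by auto
next
  case False
  then show ?thesis using assms busy_after_unsensed[of i B S N] busy_next_mono by auto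
qed

(* A myopic action minimises the probability that all sensed channels are busy: the
   channels it has but D lacks are pairwise at least as good as those D has but it lacks. *)
lemma myopic_minimizes_busy_prod:
  assumes myo: "myopic_action N k v C" and D: "valid_action N k D" and le1: "\<forall>i<N. v i \<le> 1"
  shows "(\<Prod>i\<in>C. 1 - v i) \<le> (\<Prod>i\<in>D. 1 - v i)"
proof -
  have fin: "finite C" "finite D" and CN: "C \<subseteq> {..<N}" and DN: "D \<subseteq> {..<N}"
    using myo D unfolding myopic_action_def valid_action_def by (auto intro: finite_subset)
  have card_eq: "card (C - D) = card (D - C)"
    using myo D fin unfolding myopic_action_def valid_action_def
    by (simp add: card_Diff_subset_Int Int_commute)
  have splitC: "(\<Prod>i\<in>C. 1 - v i) = (\<Prod>i\<in>C \<inter> D. 1 - v i) * (\<Prod>i\<in>C - D. 1 - v i)"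
    and splitD: "(\<Prod>i\<in>D. 1 - v i) = (\<Prod>i\<in>C \<inter> D. 1 - v i) * (\<Prod>i\<in>D - C. 1 - v i)"
    using fin prod.Int_Diff[of C _ D] prod.Int_Diff[of D _ C] by (simp_all add: Int_commute)
  have "(\<Prod>i\<in>C - D. 1 - v i) \<le> (\<Prod>i\<in>D - C. 1 - v i)"
  proof (cases "C - D = {}")
    case True
    moreover have "D - C = {}" using True card_eq fin(2) by (metis card.empty card_0_eq finite_Diff)
    ultimately show ?thesis by simp
  next
    case False
    define t where "t = Min (v ` (C - D))"
    have t_in: "t \<in> v ` (C - D)" and t_le: "\<And>i. i \<in> C - D \<Longrightarrow> t \<le> v i"
      using False fin unfolding t_def by auto
    have above: "v j \<le> t" if "j \<in> D - C" for j
      using t_in that myo DN unfolding myopic_action_def by auto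
    have t1: "t \<le> 1" using t_in CN le1 by auto
    have "(\<Prod>i\<in>C - D. 1 - v i) \<le> (\<Prod>i\<in>C - D. 1 - t)"
      using t_le CN le1 by (intro prod_mono) auto
    also have "\<dots> = (\<Prod>i\<in>D - C. 1 - t)" using card_eq by simp
    also have "\<dots> \<le> (\<Prod>i\<in>D - C. 1 - v i)"
      using above t1 by (intro prod_mono) auto
    finally show ?thesis .
  qed
  moreover have "0 \<le> (\<Prod>i\<in>C \<inter> D. 1 - v i)" using CN le1 by (intro prod_nonneg) auto
  ultimately show ?thesis
    unfolding splitC splitD by (rule mult_left_mono)
qed

lemma pair_prod_lower:
  fixes h :: "'a \<Rightarrow> real"
  assumes "card D = 2" "\<forall>i\<in>D. L \<le> h i" "\<forall>i\<in>D. i \<noteq> x \<longrightarrow> M \<le> h i" "0 \<le> L" "0 \<le> M"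
  shows "L * M \<le> prod h D"
proof -
  obtain d1 d2 where D: "D = {d1, d2}" "d1 \<noteq> d2" using assms(1) by (metis card_2_iff)
  show ?thesis
  proof (cases "d2 = x")
    case True
    then have "M * L \<le> h d1 * h d2" using assms D by (intro mult_mono) auto
    then show ?thesis using D by (simp add: mult.commute)
  next
    case False
    then have "L * M \<le> h d1 * h d2" using assms D by (intro mult_mono) auto
    then show ?thesis using D by simp
  qed
qed

(* Upper bound for the myopic policy: its slot-2 action is at least as good as the
   observed-idle channels together with ANY two outside channels j, k.  A padding index
   is replaced by a sensed busy channel, which has the same next-slot busy probability. *)
lemma myopic_failures_upper:
  assumes A: "a1 \<noteq> a2" "a1 < N" "a2 < N"
    and jk: "j \<noteq> k" "j \<notin> {a1, a2}" "k \<notin> {a1, a2}"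
    and myo: "\<forall>S. S \<subseteq> {a1, a2} \<longrightarrow>
                 myopic_action N 2 (belief_update p01 p11 w {a1, a2} S) (f S)"
    and p: "p01 \<le> p11" "p11 \<le> 1" and w: "\<forall>i<N. 0 \<le> w i \<and> w i \<le> 1"
  shows "pair_failures p01 p11 N w a1 a2 f
           \<le> busy_bound p01 p11 (fail N w a1) (fail N w a2) (fail N w j) (fail N w k)"
proof -
  let ?A = "{a1, a2}" and ?q = "1 - p11"
  let ?h = "\<lambda>S i. 1 - belief_update p01 p11 w ?A S i"
  let ?m = "miss_prob p01 p11 w ?A f"
  let ?Uj = "busy_next p01 p11 (fail N w j)" and ?Uk = "busy_next p01 p11 (fail N w k)"
  have miss_le: "?m S \<le> ?h S x * ?h S y"
    if "S \<subseteq> ?A" "x \<noteq> y" "x < N" "y < N" for S x y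
  proof -
    have "valid_action N 2 {x, y}" using that unfolding valid_action_def by auto
    moreover have "\<forall>i<N. belief_update p01 p11 w ?A S i \<le> 1"
      using belief_update_le_p11 p w by (meson order.trans)
    ultimately have "?m S \<le> (\<Prod>i\<in>{x, y}. ?h S i)"
      unfolding miss_prob_def by (rule myopic_minimizes_busy_prod[OF myo[rule_format, OF that(1)]])
    then show ?thesis using that(2) by simp
  qed
  define real_channel where "real_channel i b = (if i < N then i else b)" for i b :: nat
  have real_channel: "real_channel i b < N" "real_channel i b = i \<or> real_channel i b = b"
    if "b < N" for i b
    using that unfolding real_channel_def by auto
  have stand_in: "?h S (real_channel i b) = busy_next p01 p11 (fail N w i)"
    if "i \<notin> ?A" "b \<in> ?A - S" "S \<subseteq> ?A" for S i b
    using that busy_after_unsensed[of i ?A S N] busy_after_busy[of b ?A S]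
    unfolding real_channel_def fail_def by auto
  have "?m ?A \<le> ?q * ?q"
    using miss_le[of ?A a1 a2] A busy_after_idle[of _ ?A] by simp
  moreover have "?m {a1} \<le> ?q * ?Uj"
    using miss_le[of "{a1}" a1 "real_channel j a2"] real_channel[of a2 j] A jk
      stand_in[of j a2 "{a1}"] busy_after_idle[of a1 "{a1}"] by auto
  moreover have "?m {a2} \<le> ?q * ?Uj"
    using miss_le[of "{a2}" a2 "real_channel j a1"] real_channel[of a1 j] A jk
      stand_in[of j a1 "{a2}"] busy_after_idle[of a2 "{a2}"] by auto
  moreover have "?m {} \<le> ?Uj * ?Uk"
    using miss_le[of "{}" "real_channel j a1" "real_channel k a2"] real_channel[of a1 j] real_channel[of a2 k] A jk
      stand_in[of j a1 "{}"] stand_in[of k a2 "{}"] by auto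
  ultimately show ?thesis
    unfolding pair_failures_def busy_bound_def Let_def
    using fail_range[OF w] by (intro expected_failures_mono) auto
qed

definition two_best :: "(nat \<Rightarrow> real) \<Rightarrow> nat set \<Rightarrow> nat \<Rightarrow> nat \<Rightarrow> bool" where
  "two_best e X i j \<longleftrightarrow>
     i \<in> X \<and> j \<in> X \<and> i \<noteq> j \<and> (\<forall>x\<in>X. e i \<le> e x) \<and> (\<forall>x\<in>X - {i}. e j \<le> e x)"

(* Lower bound for an arbitrary policy sensing {b1, b2}: in slot 2 no channel is better
   than an observed-idle one, and the unobserved channels are no better than the two
   best channels outside {b1, b2} (sensed-busy channels count as busy probability 1). *)
lemma policy_failures_lower:
  assumes B: "b1 \<noteq> b2" "b1 < N" "b2 < N"
    and g: "\<forall>S. S \<subseteq> {b1, b2} \<longrightarrow> valid_action N 2 (g S)"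
    and best: "two_best (fail N w) X i3 i4" "{..<N} - {b1, b2} \<subseteq> X"
    and p: "p01 \<le> p11" "p11 \<le> 1" and w: "\<forall>i<N. 0 \<le> w i \<and> w i \<le> 1"
  shows "busy_bound p01 p11 (fail N w b1) (fail N w b2) (fail N w i3) (fail N w i4)
           \<le> pair_failures p01 p11 N w b1 b2 g"
proof -
  let ?B = "{b1, b2}" and ?q = "1 - p11"
  let ?h = "\<lambda>S i. 1 - belief_update p01 p11 w ?B S i"
  let ?m = "miss_prob p01 p11 w ?B g"
  let ?U3 = "busy_next p01 p11 (fail N w i3)" and ?U4 = "busy_next p01 p11 (fail N w i4)"
  have gS: "card (g S) = 2" "g S \<subseteq> {..<N}" if "S \<subseteq> ?B" for S
    using g that unfolding valid_action_def by auto
  have hq: "?q \<le> ?h S i" if "i < N" for S i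
    using belief_update_le_p11[of p01 p11 w i] p w that by auto
  have h3: "?U3 \<le> ?h S i" if "S \<subseteq> ?B" "i < N" "i \<notin> S" for S i
    using best that fail_range[OF w] unfolding two_best_def
    by (intro busy_after_lower[OF that] p(1)) auto
  have h4: "?U4 \<le> ?h S i" if "S \<subseteq> ?B" "i < N" "i \<notin> S" "i \<noteq> i3" for S i
    using best that fail_range[OF w] unfolding two_best_def
    by (intro busy_after_lower[OF that(1-3)] p(1)) auto
  have U: "0 \<le> ?q" "?q \<le> ?U3" "?q \<le> ?U4"
    using p fail_range[OF w] busy_next_lower by auto
  have "?q * ?q \<le> ?m ?B"
    unfolding miss_prob_def using gS[of ?B] hq U by (intro pair_prod_lower[where x = b1]) auto
  moreover have "?q * ?U3 \<le> ?m {b1}"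
    unfolding miss_prob_def using gS[of "{b1}"] hq h3[of "{b1}"] U
    by (intro pair_prod_lower[where x = b1]) auto
  moreover have "?q * ?U3 \<le> ?m {b2}"
    unfolding miss_prob_def using gS[of "{b2}"] hq h3[of "{b2}"] U
    by (intro pair_prod_lower[where x = b2]) auto
  moreover have "?U3 * ?U4 \<le> ?m {}"
    unfolding miss_prob_def using gS[of "{}"] h3[of "{}"] h4[of "{}"] U
    by (intro pair_prod_lower[where x = i3]) auto
  ultimately show ?thesis
    unfolding pair_failures_def busy_bound_def Let_def
    using fail_range[OF w] by (intro expected_failures_mono) auto
qed

lemma two_best_exists:
  assumes "finite X" "x \<in> X" "y \<in> X" "x \<noteq> y"
  shows "\<exists>i j. two_best e X i j"
proof -
  have least: "\<exists>i\<in>Y. \<forall>z\<in>Y. e i \<le> e z" if "finite Y" "Y \<noteq> {}" for Y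
    using arg_min_if_finite[OF that, of e] by (intro bexI[of _ "arg_min_on e Y"]) (auto simp: not_less)
  obtain i where i: "i \<in> X" "\<forall>z\<in>X. e i \<le> e z" using least[of X] assms by auto
  obtain j where j: "j \<in> X - {i}" "\<forall>z\<in>X - {i}. e j \<le> e z"
    using least[of "X - {i}"] assms by blast
  show ?thesis using i j unfolding two_best_def by blast
qed

lemma myopic_fail_le:
  assumes "myopic_action N k w A" "\<forall>i<N. 0 \<le> w i" "a \<in> A" "j \<notin> A"
  shows "fail N w a \<le> fail N w j"
  using assms unfolding myopic_action_def valid_action_def fail_def by auto

lemma top_pair_le_two_best:
  assumes best: "two_best e X i3 i4" and m: "m \<in> X" "e m \<le> e M"
    and top: "\<forall>x\<in>{m, M}. \<forall>j. j \<notin> {m, M} \<longrightarrow> e x \<le> e j"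
  shows "e m \<le> e i3" "e M \<le> e i4"
proof -
  show "e m \<le> e i3" using top m by (cases "i3 \<in> {m, M}") auto
  show "e M \<le> e i4"
  proof (cases "i4 = m")
    case True
    have "e i3 \<le> e m" "i3 \<noteq> m" using best m True unfolding two_best_def by auto
    moreover have "e M \<le> e i3" using top \<open>i3 \<noteq> m\<close> by (cases "i3 = M") auto
    ultimately show ?thesis using True by simp
  next
    case False
    then show ?thesis using top by (cases "i4 = M") auto
  qed
qed

lemma bound_exchange_shared:
  assumes p: "0 \<le> p01" "p01 \<le> p11" "p11 \<le> 1" and e: "\<forall>i. 0 \<le> e i \<and> e i \<le> 1"
    and top: "\<forall>x\<in>{c, a}. \<forall>j. j \<notin> {c, a} \<longrightarrow> e x \<le> e j"
    and b: "b \<noteq> a" "b \<noteq> c" and best: "two_best e X i3 i4" "c \<notin> X" and k: "k \<in> {i3, i4}"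
  shows "busy_bound p01 p11 (e c) (e a) (e b) (e k) \<le> busy_bound p01 p11 (e c) (e b) (e i3) (e i4)"
proof -
  have "e k \<le> e i4" using best k unfolding two_best_def by auto
  have "e a \<le> e b" using top b by auto
  have "e a \<le> e i3" using top best unfolding two_best_def by (cases "i3 = a") auto
  have "busy_bound p01 p11 (e c) (e a) (e b) (e k) \<le> busy_bound p01 p11 (e c) (e a) (e b) (e i4)"
    using e p \<open>e k \<le> e i4\<close> by (intro busy_bound_mono) auto
  also have "\<dots> \<le> busy_bound p01 p11 (e c) (e b) (e a) (e i4)"
    using e p \<open>e a \<le> e b\<close> by (intro busy_bound_exchange_sensed) auto
  also have "\<dots> \<le> busy_bound p01 p11 (e c) (e b) (e i3) (e i4)"
    using e p \<open>e a \<le> e i3\<close> by (intro busy_bound_mono) auto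
  finally show ?thesis .
qed

lemma bound_exchange_disjoint:
  assumes p: "0 \<le> p01" "p01 \<le> p11" "p11 \<le> 1" and e: "\<forall>i. 0 \<le> e i \<and> e i \<le> 1"
    and top: "\<forall>x\<in>{m, M}. \<forall>j. j \<notin> {m, M} \<longrightarrow> e x \<le> e j" and "e m \<le> e M"
    and b: "b1 \<notin> {m, M}" "b2 \<notin> {m, M}" and best: "two_best e X i3 i4" "m \<in> X"
  shows "busy_bound p01 p11 (e m) (e M) (e b1) (e b2) \<le> busy_bound p01 p11 (e b1) (e b2) (e i3) (e i4)"
proof -
  have "e m \<le> e b1" "e M \<le> e b2" using top b by auto
  have "e m \<le> e i3" "e M \<le> e i4"
    using top_pair_le_two_best[OF best(1) best(2) \<open>e m \<le> e M\<close> top] by auto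
  have "busy_bound p01 p11 (e m) (e M) (e b1) (e b2) = busy_bound p01 p11 (e M) (e m) (e b1) (e b2)"
    by (rule busy_bound_sym)
  also have "\<dots> \<le> busy_bound p01 p11 (e M) (e b1) (e m) (e b2)"
    using e p \<open>e m \<le> e b1\<close> by (intro busy_bound_exchange_sensed) auto
  also have "\<dots> \<le> busy_bound p01 p11 (e b2) (e b1) (e m) (e M)"
    using e p \<open>e M \<le> e b2\<close> by (intro busy_bound_exchange_first) auto
  also have "\<dots> = busy_bound p01 p11 (e b1) (e b2) (e m) (e M)"
    by (rule busy_bound_sym)
  also have "\<dots> \<le> busy_bound p01 p11 (e b1) (e b2) (e i3) (e i4)"
    using e p \<open>e m \<le> e i3\<close> \<open>e M \<le> e i4\<close> by (intro busy_bound_mono) auto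
  finally show ?thesis .
qed

lemma busy_bound_pair_cong:
  "{x1, x2} = {y1, y2} \<Longrightarrow>
     busy_bound p01 p11 (e x1) (e x2) u v = busy_bound p01 p11 (e y1) (e y2) u v"
  by (metis doubleton_eq_iff busy_bound_sym)

lemma myopic_bound_le:
  assumes p: "0 \<le> p01" "p01 \<le> p11" "p11 \<le> 1" and e: "\<forall>i. 0 \<le> e i \<and> e i \<le> 1"
    and A: "A = {a1, a2}" "a1 \<noteq> a2" "A \<subseteq> C" and B: "B = {b1, b2}" "b1 \<noteq> b2"
    and top: "\<forall>x\<in>A. \<forall>j. j \<notin> A \<longrightarrow> e x \<le> e j" and best: "two_best e (C - B) i3 i4"
  shows "\<exists>j k. j \<noteq> k \<and> j \<notin> A \<and> k \<notin> A \<and>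
           busy_bound p01 p11 (e a1) (e a2) (e j) (e k)
             \<le> busy_bound p01 p11 (e b1) (e b2) (e i3) (e i4)"
proof -
  have i34: "i3 \<notin> B" "i4 \<notin> B" "i3 \<noteq> i4" using best unfolding two_best_def by auto
  consider "A = B" | "A \<inter> B = {}" | c where "c \<in> A \<inter> B" "A \<noteq> B" by blast
  then show ?thesis
  proof cases
    case 1
    then have "busy_bound p01 p11 (e a1) (e a2) (e i3) (e i4)
                 = busy_bound p01 p11 (e b1) (e b2) (e i3) (e i4)"
      using A(1) B(1) by (intro busy_bound_pair_cong) simp
    then show ?thesis using i34 1 by (intro exI[of _ i3] exI[of _ i4]) simp
  next
    case 2
    obtain m M where mM: "A = {m, M}" "e m \<le> e M"
    proof (cases "e a1 \<le> e a2")
      case True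
      then show ?thesis using that A(1) by blast
    next
      case False
      then show ?thesis using that[of a2 a1] A(1) by (simp add: insert_commute)
    qed
    have top': "\<forall>x\<in>{m, M}. \<forall>j. j \<notin> {m, M} \<longrightarrow> e x \<le> e j" using top mM(1) by simp
    have "b1 \<notin> {m, M}" "b2 \<notin> {m, M}" using 2 B(1) mM(1) by blast+
    moreover have "m \<in> C - B" using 2 A(3) mM(1) by blast
    ultimately have "busy_bound p01 p11 (e m) (e M) (e b1) (e b2)
                 \<le> busy_bound p01 p11 (e b1) (e b2) (e i3) (e i4)"
      by (rule bound_exchange_disjoint[OF p e top' mM(2) _ _ best])
    moreover have "busy_bound p01 p11 (e a1) (e a2) (e b1) (e b2)
                 = busy_bound p01 p11 (e m) (e M) (e b1) (e b2)"
      using A(1) mM(1) by (intro busy_bound_pair_cong) simp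
    moreover have "b1 \<notin> A" "b2 \<notin> A" using 2 B(1) by blast+
    ultimately show ?thesis using B(2) by (intro exI[of _ b1] exI[of _ b2]) simp
  next
    case 3
    define a where "a = (if c = a1 then a2 else a1)"
    define b where "b = (if c = b1 then b2 else b1)"
    have a: "A = {c, a}" "a \<noteq> c" using A 3 unfolding a_def by auto
    have b: "B = {c, b}" "b \<noteq> c" using B 3 unfolding b_def by auto
    define k where "k = (if i4 = a then i3 else i4)"
    have top': "\<forall>x\<in>{c, a}. \<forall>j. j \<notin> {c, a} \<longrightarrow> e x \<le> e j" using top a(1) by simp
    have "b \<noteq> a" "b \<noteq> c" "c \<notin> C - B" "k \<in> {i3, i4}"
      using 3 a b unfolding k_def by auto
    then have "busy_bound p01 p11 (e c) (e a) (e b) (e k)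
                 \<le> busy_bound p01 p11 (e c) (e b) (e i3) (e i4)"
      by (rule bound_exchange_shared[OF p e top' _ _ best])
    moreover have "busy_bound p01 p11 (e a1) (e a2) (e b) (e k)
                 = busy_bound p01 p11 (e c) (e a) (e b) (e k)"
      using A(1) a(1) by (intro busy_bound_pair_cong) simp
    moreover have "busy_bound p01 p11 (e c) (e b) (e i3) (e i4)
                 = busy_bound p01 p11 (e b1) (e b2) (e i3) (e i4)"
      using B(1) b(1) by (intro busy_bound_pair_cong) simp
    moreover have "b \<noteq> k" "b \<notin> A" "k \<notin> A"
      using 3 a b i34 unfolding k_def by auto
    ultimately show ?thesis by (intro exI[of _ b] exI[of _ k]) simp
  qed
qed

lemma myopic_policy_is_policy: "is_myopic_policy2 N k p01 p11 w pol \<Longrightarrow> is_policy2 N k pol"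
  unfolding is_myopic_policy2_def is_policy2_def myopic_action_def by auto

lemma myopic_policy_dominates:
  assumes p: "0 \<le> p01" "p01 \<le> p11" "p11 \<le> 1" and w: "\<forall>i<N. 0 \<le> w i \<and> w i \<le> 1"
    and myo: "is_myopic_policy2 N 2 p01 p11 w pol" and other: "is_policy2 N 2 pol'"
  shows "value2 p01 p11 w pol' \<le> value2 p01 p11 w pol"
proof -
  obtain A f where pol: "pol = (A, f)" by (cases pol)
  obtain B g where pol': "pol' = (B, g)" by (cases pol')
  have myoA: "myopic_action N 2 w A"
    and myoF: "\<forall>S. S \<subseteq> A \<longrightarrow> myopic_action N 2 (belief_update p01 p11 w A S) (f S)"
    using myo unfolding is_myopic_policy2_def pol by auto
  have vB: "valid_action N 2 B" and vg: "\<forall>S. S \<subseteq> B \<longrightarrow> valid_action N 2 (g S)"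
    using other unfolding is_policy2_def pol' by auto
  obtain a1 a2 where A: "A = {a1, a2}" "a1 \<noteq> a2" "a1 < N" "a2 < N"
    using myoA unfolding myopic_action_def valid_action_def by (auto simp: card_2_iff)
  obtain b1 b2 where B: "B = {b1, b2}" "b1 \<noteq> b2" "b1 < N" "b2 < N"
    using vB unfolding valid_action_def by (auto simp: card_2_iff)
  let ?e = "fail N w"
  \<comment> \<open>The padding channels N and N+1 guarantee two candidates outside B.\<close>
  have "\<exists>i3 i4. two_best ?e ({..<N + 2} - B) i3 i4"
    using B by (intro two_best_exists[of _ N "Suc N"]) auto
  then obtain i3 i4 where best: "two_best ?e ({..<N + 2} - B) i3 i4" by blast
  have e01: "\<forall>j. 0 \<le> ?e j \<and> ?e j \<le> 1" using fail_range[OF w] by blast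
  have AC: "A \<subseteq> {..<N + 2}" using A by auto
  have top: "\<forall>x\<in>A. \<forall>j. j \<notin> A \<longrightarrow> ?e x \<le> ?e j"
    using myopic_fail_le[OF myoA] w by auto
  obtain j k where jk: "j \<noteq> k" "j \<notin> A" "k \<notin> A"
    and cmp: "busy_bound p01 p11 (?e a1) (?e a2) (?e j) (?e k)
                \<le> busy_bound p01 p11 (?e b1) (?e b2) (?e i3) (?e i4)"
    using myopic_bound_le[OF p e01 A(1,2) AC B(1,2) top best] by blast
  have "2 - value2 p01 p11 w pol = pair_failures p01 p11 N w a1 a2 f"
    using value2_pair[OF A(2-4)] pol A(1) by simp
  also have "\<dots> \<le> busy_bound p01 p11 (?e a1) (?e a2) (?e j) (?e k)"
    using myopic_failures_upper[OF A(2-4)] jk myoF p w A(1) by auto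
  also have "\<dots> \<le> busy_bound p01 p11 (?e b1) (?e b2) (?e i3) (?e i4)" by (rule cmp)
  also have "\<dots> \<le> pair_failures p01 p11 N w b1 b2 g"
    using vg B(1) by (intro policy_failures_lower[OF B(2-4) _ best[unfolded B(1)] _ p(2,3) w]) auto
  also have "\<dots> = 2 - value2 p01 p11 w pol'"
    using value2_pair[OF B(2-4)] pol' B(1) by simp
  finally show ?thesis by simp
qed

theorem theorem1:
  fixes N :: nat and p01 p11 :: real and w :: "nat \<Rightarrow> real"
    and pol :: "nat set \<times> (nat set \<Rightarrow> nat set)"
  assumes "N \<ge> 2"
    and "0 \<le> p01" "p01 \<le> 1" "0 \<le> p11" "p11 \<le> 1"
    and "p11 \<ge> p01"
    and "\<forall>i<N. 0 \<le> w i \<and> w i \<le> 1"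
    and "is_myopic_policy2 N 2 p01 p11 w pol"
  shows "value2 p01 p11 w pol =
           (SUP pol'\<in>{pol'. is_policy2 N 2 pol'}. value2 p01 p11 w pol')"
proof (rule cSup_eq_maximum[symmetric])
  show "value2 p01 p11 w pol \<in> value2 p01 p11 w ` {pol'. is_policy2 N 2 pol'}"
    using myopic_policy_is_policy[OF assms(8)] by simp
  show "x \<le> value2 p01 p11 w pol" if "x \<in> value2 p01 p11 w ` {pol'. is_policy2 N 2 pol'}" for x
    using that myopic_policy_dominates[OF assms(2,6,5,7,8)] by auto
qed

end
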